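(* Let $S=(s_{ij})$ be a real matrix of order $n+1$ and $C=(c_{ij})$ a real matrix of order $n$, with spectra (counted with multiplicities) $\sigma(S)=(\lambda_1,\ldots,\lambda_{n+1})$ and $\sigma(C)=(\mu_1,\ldots,\mu_n)$. Suppose $s_{ij}\ge|c_{ij}|$ for $1\le i,j\le n$, $s_{i,n+1}\ge0$ for $i=1,\ldots,n+1$, and let $\varphi^{(1)}_{n+1,i},\varphi^{(2)}_{n+1,i}\ge0$ ($i=1,\ldots,n$) satisfy $\varphi^{(1)}_{n+1,i}+\varphi^{(2)}_{n+1,i}=s_{n+1,i}$. Then for every $0\le\gamma\le1$, the nonnegative $(2n+1)\times(2n+1)$ matrices $M_{\pm\gamma}$ defined as follows have spectra $(\lambda_1,\ldots,\lambda_{n+1},\pm\gamma\mu_1,\ldots,\pm\gamma\mu_n)$ respectively: for $1\le i,j\le n$, the entries of $M_{\pm\gamma}$ in rows $2i-1,2i$ and columns $2j-1,2j$ form the block $\begin{pmatrix}\frac{s_{ij}\pm\gamma c_{ij}}{2}&\frac{s_{ij}\mp\gamma c_{ij}}{2}\\ \frac{s_{ij}\mp\gamma c_{ij}}{2}&\frac{s_{ij}\pm\gamma c_{ij}}{2}\end{pmatrix}$; the entries in rows $2i-1,2i$ and column $2n+1$ are both $s_{i,n+1}$; the entries in row $2n+1$ and columns $2j-1,2j$ are $\varphi^{(1)}_{n+1,j},\varphi^{(2)}_{n+1,j}$; and the $(2n+1,2n+1)$ entry is $s_{n+1,n+1}$.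
   Context: Spectra are counted with multiplicities. Nonnegative means entrywise nonnegative. *)

theory Defs
  imports "Jordan_Normal_Form.Char_Poly"
begin

definition spec :: "real mat \<Rightarrow> complex multiset" where
  "spec A = proots (char_poly (map_mat complex_of_real A))"

definition nonneg_mat :: "real mat \<Rightarrow> bool" where
  "nonneg_mat A \<longleftrightarrow> (\<forall>i < dim_row A. \<forall>j < dim_col A. A $$ (i, j) \<ge> 0)"

text \<open>The matrix M_{eps*gamma} (eps = 1 or -1), 0-based indices: paper rows 2i-1,2i
  (i=1..n) are rows 2i, 2i+1 (i=0..n-1); paper row/column 2n+1 is index 2n.\<close>
definition Mgam :: "nat \<Rightarrow> real mat \<Rightarrow> real mat \<Rightarrow> (nat \<Rightarrow> real) \<Rightarrow> (nat \<Rightarrow> real)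
    \<Rightarrow> real \<Rightarrow> real \<Rightarrow> real mat" where
  "Mgam n S C phi1 phi2 eps \<gamma> = mat (2*n+1) (2*n+1) (\<lambda>(r, c).
     if r = 2*n \<and> c = 2*n then S $$ (n, n)
     else if r = 2*n then (if even c then phi1 (c div 2) else phi2 (c div 2))
     else if c = 2*n then S $$ (r div 2, n)
     else if even r = even c then (S $$ (r div 2, c div 2) + eps * \<gamma> * C $$ (r div 2, c div 2)) / 2
     else (S $$ (r div 2, c div 2) - eps * \<gamma> * C $$ (r div 2, c div 2)) / 2)"

end

theory Submission
  imports Defs "Jordan_Normal_Form.Jordan_Normal_Form_Existence"
begin

text \<open>Write a = eps \<gamma> and let e_0, ..., e_2n be the standard basis (0-based, as in Mgam).
  Each 2\<times>2 block ((s+ac)/2, (s-ac)/2; (s-ac)/2, (s+ac)/2) has eigenvectors (1,1) and (1,-1)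
  with eigenvalues s and ac. Hence in the basis e_2k + e_2k+1 (k < n), e_2n, e_2j - e_2j+1 (j < n)
  the matrix M_a becomes block upper triangular with diagonal blocks S and a C: the condition
  phi1 + phi2 = last row of S is exactly what makes the e_2n-coordinate of M (e_2k + e_2k+1)
  equal to s_n,k. So M_a is similar to that block matrix, and its spectrum is the union of
  the spectra of S and of a C. Nonnegativity only needs \<bar>a c_ij\<bar> \<le> s_ij.\<close>

lemma sum_lessThan_odd_pairs:
  fixes n :: nat
  shows "(\<Sum>t<2*n+1. f t) = (\<Sum>j<n. f (2*j) + f (2*j+1)) + (f (2*n) :: 'a :: comm_monoid_add)"
proof (induction n)
  case 0
  then show ?case by simp
next
  case (Suc n)
  have "2 * Suc n + 1 = Suc (Suc (2*n+1))" by simp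
  then show ?case using Suc by (simp add: algebra_simps)
qed

lemma sum_lessThan_odd_thirds:
  fixes n :: nat
  shows "(\<Sum>t<2*n+1. f t) = (\<Sum>j<n. f j) + f n + (\<Sum>j<n. (f (n+1+j) :: 'a :: comm_monoid_add))"
proof -
  have "(\<Sum>t<2*n+1. f t) = (\<Sum>t<n+1. f t) + (\<Sum>t\<in>{n+1..<2*n+1}. f t)"
    by (metis atLeast0LessThan le_add2 sum.atLeastLessThan_concat zero_le mult_2 add.commute
        add.left_commute)
  also have "(\<Sum>t\<in>{n+1..<2*n+1}. f t) = (\<Sum>j<n. f (n+1+j))"
    by (rule sum.reindex_bij_witness[where j="\<lambda>t. t - (n+1)" and i="\<lambda>j. n+1+j"]) auto
  finally show ?thesis by simp
qed

lemma less_odd_parity_cases: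
  fixes r :: nat
  assumes "r < 2*n+1"
  obtains "r = 2*n" | q where "q < n" "r = 2*q" | q where "q < n" "r = 2*q+1"
proof -
  have "r = 2*(r div 2) + r mod 2" by simp
  then show ?thesis using assms that
    by (cases "r mod 2 = 0"; cases "r div 2 < n"; auto; presburger)
qed

lemma less_odd_thirds_cases:
  fixes k :: nat
  assumes "k < 2*n+1"
  obtains "k < n" | "k = n" | j where "j < n" "k = n+1+j"
proof -
  consider "k < n" | "k = n" | "k > n" by linarith
  then show ?thesis
  proof cases
    case 3
    then have "k = n+1+(k-(n+1))" "k-(n+1) < n" using assms by auto
    then show ?thesis using that(3) by blast
  qed (use that in auto)
qed

lemma index_mult_mat_mat:
  "i < m \<Longrightarrow> j < l \<Longrightarrow> (mat m k f * mat k l g) $$ (i,j) = (\<Sum>t<k. f (i,t) * g (t,j))"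
  by (auto simp add: scalar_prod_def lessThan_atLeast0 intro!: sum.cong)

lemma if_zero_mult_distrib:
  "(if P then a else 0) * b = (if P then a*b else (0::'a::mult_zero))"
  "b * (if P then a else 0) = (if P then b*a else 0)"
  by simp_all

lemma if_zero_add_distrib:
  "(if P then a else 0) + (if P then b else 0) = (if P then a+b else (0::'a::monoid_add))"
  by simp

lemma even_ne_odd [simp]: "2*(q::nat) \<noteq> Suc (2*p)" "Suc (2*q) \<noteq> 2*p"
  by presburger+

lemmas delta_simps = if_zero_mult_distrib if_zero_add_distrib sum.delta sum.delta'

text \<open>Columns k < n, n and n+1+j of pairing_mat n are e_2k + e_2k+1, e_2n and e_2j - e_2j+1.\<close>

definition pairing_mat :: "nat \<Rightarrow> real mat" where
  "pairing_mat n = mat (2*n+1) (2*n+1) (\<lambda>(r,k).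
     if k < n then (if r < 2*n \<and> r div 2 = k then 1 else 0)
     else if k = n then (if r = 2*n then 1 else 0)
     else if r < 2*n \<and> r div 2 = k - Suc n then (if even r then 1 else -1) else 0)"

definition pairing_mat_inv :: "nat \<Rightarrow> real mat" where
  "pairing_mat_inv n = mat (2*n+1) (2*n+1) (\<lambda>(k,r).
     if k < n then (if r < 2*n \<and> r div 2 = k then 1/2 else 0)
     else if k = n then (if r = 2*n then 1 else 0)
     else if r < 2*n \<and> r div 2 = k - Suc n then (if even r then 1/2 else -1/2) else 0)"

lemma pairing_mat_carrier: "pairing_mat n \<in> carrier_mat (2*n+1) (2*n+1)"
  and pairing_mat_inv_carrier: "pairing_mat_inv n \<in> carrier_mat (2*n+1) (2*n+1)"
  by (simp_all add: pairing_mat_def pairing_mat_inv_def)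

lemma pairing_mat_mult_inv: "pairing_mat n * pairing_mat_inv n = 1\<^sub>m (2*n+1)"
proof (rule eq_matI)
  fix r s assume "r < dim_row (1\<^sub>m (2*n+1))" "s < dim_col (1\<^sub>m (2*n+1))"
  then have r: "r < 2*n+1" and s: "s < 2*n+1" by auto
  then show "(pairing_mat n * pairing_mat_inv n) $$ (r,s) = 1\<^sub>m (2*n+1) $$ (r,s)"
    unfolding pairing_mat_def pairing_mat_inv_def index_mult_mat_mat[OF r s] sum_lessThan_odd_thirds
    by (cases rule: less_odd_parity_cases[OF r]; cases rule: less_odd_parity_cases[OF s])
       (auto simp: delta_simps)
qed (simp_all add: pairing_mat_def pairing_mat_inv_def)

lemma pairing_mat_inv_mult: "pairing_mat_inv n * pairing_mat n = 1\<^sub>m (2*n+1)"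
proof (rule eq_matI)
  fix r s assume "r < dim_row (1\<^sub>m (2*n+1))" "s < dim_col (1\<^sub>m (2*n+1))"
  then have r: "r < 2*n+1" and s: "s < 2*n+1" by auto
  then show "(pairing_mat_inv n * pairing_mat n) $$ (r,s) = 1\<^sub>m (2*n+1) $$ (r,s)"
    unfolding pairing_mat_def pairing_mat_inv_def index_mult_mat_mat[OF r s] sum_lessThan_odd_pairs
    by (cases rule: less_odd_thirds_cases[OF r]; cases rule: less_odd_thirds_cases[OF s])
       (auto simp: delta_simps)
qed (simp_all add: pairing_mat_def pairing_mat_inv_def)

definition Mgam_triangular :: "nat \<Rightarrow> real mat \<Rightarrow> real mat \<Rightarrow> (nat \<Rightarrow> real) \<Rightarrow> (nat \<Rightarrow> real)
    \<Rightarrow> real \<Rightarrow> real mat" where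
  "Mgam_triangular n S C phi1 phi2 a = four_block_mat S
     (mat (n+1) n (\<lambda>(i,j). if i = n then phi1 j - phi2 j else 0)) (0\<^sub>m n (n+1)) (a \<cdot>\<^sub>m C)"

lemma Mgam_mult_pairing_mat:
  assumes S: "S \<in> carrier_mat (n+1) (n+1)" and C: "C \<in> carrier_mat n n"
    and phi: "\<forall>i < n. phi1 i + phi2 i = S $$ (n, i)"
  shows "Mgam n S C phi1 phi2 eps \<gamma> * pairing_mat n
    = pairing_mat n * Mgam_triangular n S C phi1 phi2 (eps * \<gamma>)"
proof -
  define B where "B = mat (2*n+1) (2*n+1) (\<lambda>(i,j). Mgam_triangular n S C phi1 phi2 (eps * \<gamma>) $$ (i,j))"
  have B: "Mgam_triangular n S C phi1 phi2 (eps * \<gamma>) = B"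
    unfolding B_def Mgam_triangular_def by (rule eq_matI) (use S C in auto)
  have "Mgam n S C phi1 phi2 eps \<gamma> * pairing_mat n = pairing_mat n * B"
  proof (rule eq_matI)
    fix r s assume "r < dim_row (pairing_mat n * B)" "s < dim_col (pairing_mat n * B)"
    then have r: "r < 2*n+1" and s: "s < 2*n+1" by (auto simp: B_def pairing_mat_def)
    then show "(Mgam n S C phi1 phi2 eps \<gamma> * pairing_mat n) $$ (r,s) = (pairing_mat n * B) $$ (r,s)"
      unfolding Mgam_def pairing_mat_def B_def index_mult_mat_mat[OF r s]
      apply (subst sum_lessThan_odd_pairs, subst sum_lessThan_odd_thirds)
      using phi S C
      by (cases rule: less_odd_parity_cases[OF r]; cases rule: less_odd_thirds_cases[OF s])
         (auto simp: Mgam_triangular_def delta_simps add_divide_distrib[symmetric]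
           diff_divide_distrib[symmetric])
  qed (simp_all add: Mgam_def pairing_mat_def B_def)
  then show ?thesis unfolding B .
qed

lemma similar_mat_Mgam_triangular:
  assumes "S \<in> carrier_mat (n+1) (n+1)" "C \<in> carrier_mat n n"
    and "\<forall>i < n. phi1 i + phi2 i = S $$ (n, i)"
  shows "similar_mat (Mgam n S C phi1 phi2 eps \<gamma>) (Mgam_triangular n S C phi1 phi2 (eps * \<gamma>))"
proof -
  let ?M = "Mgam n S C phi1 phi2 eps \<gamma>" and ?T = "Mgam_triangular n S C phi1 phi2 (eps * \<gamma>)"
    and ?P = "pairing_mat n" and ?Q = "pairing_mat_inv n"
  have carrier: "{?M, ?T, ?P, ?Q} \<subseteq> carrier_mat (2*n+1) (2*n+1)"
    using assms pairing_mat_carrier pairing_mat_inv_carrier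
    by (auto simp: Mgam_def Mgam_triangular_def)
  have "?M = ?M * (?P * ?Q)"
    using carrier right_mult_one_mat[of ?M "2*n+1" "2*n+1"] by (simp add: pairing_mat_mult_inv)
  also have "\<dots> = (?M * ?P) * ?Q"
    using carrier by (intro assoc_mult_mat[symmetric]) auto
  also have "\<dots> = ?P * ?T * ?Q"
    unfolding Mgam_mult_pairing_mat[OF assms] ..
  finally show ?thesis
    using carrier pairing_mat_mult_inv pairing_mat_inv_mult by (intro similar_matI) auto
qed

lemma char_poly_four_block_mat_lower_left_zero:
  fixes A :: "'a :: idom mat"
  assumes A: "A \<in> carrier_mat n n" and B: "B \<in> carrier_mat n m" and D: "D \<in> carrier_mat m m"
  shows "char_poly (four_block_mat A B (0\<^sub>m m n) D) = char_poly A * char_poly D"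
proof -
  let ?cm = "\<lambda>A. [:0, 1:] \<cdot>\<^sub>m 1\<^sub>m (dim_row A) + map_mat (\<lambda>a. [:- a:]) A"
  have "?cm (four_block_mat A B (0\<^sub>m m n) D)
      = four_block_mat (?cm A) (map_mat (\<lambda>a. [:- a:]) B) (0\<^sub>m m n) (?cm D)"
    by (rule eq_matI) (use A B D in \<open>auto simp: one_poly_def\<close>)
  moreover have "det (four_block_mat (?cm A) (map_mat (\<lambda>a. [:- a:]) B) (0\<^sub>m m n) (?cm D))
      = det (?cm A) * det (?cm D)"
    by (rule det_four_block_mat_lower_left_zero[OF _ _ refl]) (use A B D in auto)
  ultimately show ?thesis
    unfolding char_poly_defs using A D by simp
qed

lemma char_poly_nonzero: "A \<in> carrier_mat n n \<Longrightarrow> char_poly A \<noteq> 0"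
  using degree_monic_char_poly[of A n] by auto

lemma proots_char_poly_smult:
  fixes A :: "complex mat"
  assumes A: "A \<in> carrier_mat n n"
  shows "proots (char_poly (k \<cdot>\<^sub>m A)) = image_mset (\<lambda>\<mu>. k * \<mu>) (proots (char_poly A))"
proof (cases "k = 0")
  case True
  have zero: "0 \<cdot>\<^sub>m A = 0\<^sub>m n n" by (rule eq_matI) (use A in auto)
  have "char_poly (0\<^sub>m n n :: complex mat) = (\<Prod>a \<leftarrow> diag_mat (0\<^sub>m n n). [:- a, 1:])"
    by (rule char_poly_upper_triangular[of _ n]) (auto simp: upper_triangular_def)
  also have "diag_mat (0\<^sub>m n n :: complex mat) = replicate n 0"
    by (auto simp: diag_mat_def intro!: nth_equalityI)
  finally have "char_poly (0\<^sub>m n n :: complex mat) = [:0,1:] ^ n"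
    by (simp add: prod_list_replicate)
  moreover have "size (proots (char_poly A)) = n"
    using size_proots_complex degree_monic_char_poly[OF A] by simp
  ultimately show ?thesis
    unfolding True zero by (simp add: proots_power image_mset_const_eq)
next
  case False
  show ?thesis
  proof (rule multiset_eqI)
    fix x
    have preimage: "(\<lambda>\<mu>. k * \<mu>) -` {x} = {x/k}" using False by (auto simp: field_simps)
    have "count (image_mset (\<lambda>\<mu>. k * \<mu>) (proots (char_poly A))) x
        = count (proots (char_poly A)) (x/k)"
      unfolding count_image_mset preimage by (auto simp: Int_insert_left count_eq_zero_iff)
    also have "\<dots> = order (x/k) (char_poly A)"
      using char_poly_nonzero[OF A] by simp
    also have "\<dots> = count (proots (char_poly (k \<cdot>\<^sub>m A))) x"
      using order_char_poly_smult[OF A False] char_poly_nonzero[of "k \<cdot>\<^sub>m A" n] A by simp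
    finally show "count (proots (char_poly (k \<cdot>\<^sub>m A))) x
      = count (image_mset (\<lambda>\<mu>. k * \<mu>) (proots (char_poly A))) x" by simp
  qed
qed

lemma spec_via_real_char_poly:
  "A \<in> carrier_mat n n \<Longrightarrow> spec A = proots (map_poly complex_of_real (char_poly A))"
  unfolding spec_def by (simp add: of_real_hom.char_poly_hom)

lemma spec_similar:
  assumes "similar_mat A B"
  shows "spec A = spec B"
proof -
  obtain n where "A \<in> carrier_mat n n" "B \<in> carrier_mat n n"
    using similar_matD[OF assms] by auto
  then show ?thesis
    using char_poly_similar[OF assms] by (simp add: spec_via_real_char_poly)
qed

lemma spec_four_block_mat_lower_left_zero:
  assumes A: "A \<in> carrier_mat n n" and B: "B \<in> carrier_mat n m" and D: "D \<in> carrier_mat m m"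
  shows "spec (four_block_mat A B (0\<^sub>m m n) D) = spec A + spec D"
proof -
  interpret complex_hom: map_poly_comm_ring_hom complex_of_real ..
  have block: "four_block_mat A B (0\<^sub>m m n) D \<in> carrier_mat (n+m) (n+m)"
    using A D by simp
  have "spec (four_block_mat A B (0\<^sub>m m n) D)
      = proots (char_poly (map_mat complex_of_real A) * char_poly (map_mat complex_of_real D))"
    unfolding spec_via_real_char_poly[OF block] char_poly_four_block_mat_lower_left_zero[OF A B D]
    using A D by (simp add: complex_hom.hom_mult of_real_hom.char_poly_hom)
  also have "\<dots> = spec A + spec D"
    unfolding spec_def by (rule proots_mult; rule char_poly_nonzero) (use A D in auto)
  finally show ?thesis .
qed

lemma spec_smult:
  assumes "A \<in> carrier_mat n n"
  shows "spec (a \<cdot>\<^sub>m A) = image_mset (\<lambda>\<mu>. complex_of_real a * \<mu>) (spec A)"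
proof -
  have "map_mat complex_of_real (a \<cdot>\<^sub>m A) = complex_of_real a \<cdot>\<^sub>m map_mat complex_of_real A"
    by (rule eq_matI) auto
  then show ?thesis
    unfolding spec_def using assms by (simp add: proots_char_poly_smult[of _ n])
qed

lemma spec_Mgam:
  assumes S: "S \<in> carrier_mat (n+1) (n+1)" and C: "C \<in> carrier_mat n n"
    and phi: "\<forall>i < n. phi1 i + phi2 i = S $$ (n, i)"
  shows "spec (Mgam n S C phi1 phi2 eps \<gamma>)
    = spec S + image_mset (\<lambda>\<mu>. complex_of_real (eps * \<gamma>) * \<mu>) (spec C)"
  unfolding spec_similar[OF similar_mat_Mgam_triangular[OF assms]] Mgam_triangular_def
  using S C by (simp add: spec_four_block_mat_lower_left_zero spec_smult)

lemma nonneg_mat_Mgam: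
  assumes SC: "\<forall>i < n. \<forall>j < n. S $$ (i, j) \<ge> \<bar>C $$ (i, j)\<bar>"
    and Scol: "\<forall>i \<le> n. S $$ (i, n) \<ge> 0"
    and phi: "\<forall>i < n. phi1 i \<ge> 0 \<and> phi2 i \<ge> 0"
    and scale: "\<bar>eps * \<gamma>\<bar> \<le> 1"
  shows "nonneg_mat (Mgam n S C phi1 phi2 eps \<gamma>)"
proof -
  have block_nonneg: "0 \<le> S $$ (i,j) + eps * \<gamma> * C $$ (i,j) \<and> eps * \<gamma> * C $$ (i,j) \<le> S $$ (i,j)"
    if "i < n" "j < n" for i j
  proof -
    have "\<bar>eps * \<gamma> * C $$ (i,j)\<bar> \<le> \<bar>C $$ (i,j)\<bar>"
      unfolding abs_mult[of "eps * \<gamma>"] using scale by (simp add: mult_left_le_one_le)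
    then show ?thesis using SC that by fastforce
  qed
  show ?thesis
    unfolding nonneg_mat_def
  proof (intro allI impI)
    fix r c assume "r < dim_row (Mgam n S C phi1 phi2 eps \<gamma>)" "c < dim_col (Mgam n S C phi1 phi2 eps \<gamma>)"
    then have r: "r < 2*n+1" and c: "c < 2*n+1" by (auto simp: Mgam_def)
    show "0 \<le> Mgam n S C phi1 phi2 eps \<gamma> $$ (r,c)"
      unfolding Mgam_def using r c
      by (cases rule: less_odd_parity_cases[OF r]; cases rule: less_odd_parity_cases[OF c])
         (auto simp: block_nonneg phi Scol)
  qed
qed

theorem theorem6:
  fixes n :: nat and S C :: "real mat" and phi1 phi2 :: "nat \<Rightarrow> real" and \<gamma> :: real
  assumes S: "S \<in> carrier_mat (n+1) (n+1)"
    and C: "C \<in> carrier_mat n n"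
    and SC: "\<forall>i < n. \<forall>j < n. S $$ (i, j) \<ge> \<bar>C $$ (i, j)\<bar>"
    and Scol: "\<forall>i \<le> n. S $$ (i, n) \<ge> 0"
    and phi: "\<forall>i < n. phi1 i \<ge> 0 \<and> phi2 i \<ge> 0 \<and> phi1 i + phi2 i = S $$ (n, i)"
    and gam: "0 \<le> \<gamma>" "\<gamma> \<le> 1"
  shows "\<forall>eps \<in> {1, -1::real}.
           nonneg_mat (Mgam n S C phi1 phi2 eps \<gamma>) \<and>
           spec (Mgam n S C phi1 phi2 eps \<gamma>)
             = spec S + image_mset (\<lambda>\<mu>. complex_of_real (eps * \<gamma>) * \<mu>) (spec C)"
proof (intro ballI conjI)
  fix eps :: real
  assume "eps \<in> {1, -1}"
  then have "\<bar>eps * \<gamma>\<bar> \<le> 1" using gam by auto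
  then show "nonneg_mat (Mgam n S C phi1 phi2 eps \<gamma>)"
    using SC Scol phi by (intro nonneg_mat_Mgam) auto
  show "spec (Mgam n S C phi1 phi2 eps \<gamma>)
      = spec S + image_mset (\<lambda>\<mu>. complex_of_real (eps * \<gamma>) * \<mu>) (spec C)"
    using S C phi by (intro spec_Mgam) auto
qed

end
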